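(* Let $r \ge 3$ and let $n$ be defined by $n=2$ if $r=3$, $n=\lfloor r/2\rfloor$ if $4\le r\le 7$, and $n=\lceil r/2\rceil-1$ if $r\ge 8$. Let $I_1\subseteq\mathbb{F}_3^r$ be the set of vectors with all entries in $\{0,1\}$ having exactly $k$ entries equal to $1$ for some $k\in[n,2n-1]$, and let $I_2=\{2x : x\in I_1\}$. Let $R\subseteq I_1$ be the fixed set of $r$ regular redundant indices chosen by the construction, which forms a basis of $\mathbb{F}_3^r$. The position set is $I=I_1\cup I_2\cup\{O,E\}$, where $O,E$ are two additional positions. A word $v=(v_i)_{i\in I}\in\mathbb{F}_3^{I}$ is an A2 codeword if \[\bigoplus_{i\in I_1\cup I_2} v_i\cdot i = 0\ \text{ in } \mathbb{F}_3^r,\qquad v_O+\sum_{i\in I_1} v_i\equiv 0 \pmod 3,\qquad v_E+\sum_{i\in I_2} v_i\equiv 0\pmod 3.\] The message positions are $M=(I_1\cup I_2)\setminus R$, and a message $X\in\mathbb{F}_3^{M}$ is encoded as the unique A2 codeword $X'$ whose restriction to $M$ equals $X$. Then for any two distinct messages $X\neq Y$, the codewords $X'$ and $Y'$ differ in at least $4$ positions.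
   Context: Index vectors are identified with $r$-trit ternary strings; $\oplus$ denotes componentwise addition modulo $3$ on $\mathbb{F}_3^r$ (the paper calls it ternary XOR), and $v_i\cdot i$ means the vector $i$ scaled by $v_i\in\mathbb{F}_3$. For example, with $r=4$, $n=2$, $R=\{0011,0110,0111,1110\}$ this gives the $[22,16,4]_3$ code. *)

theory Defs
  imports Main
begin

text \<open>Vectors of F_3^r are modelled as functions nat => int with entries in {0,1,2}
  at coordinates below r and 0 elsewhere; arithmetic is taken mod 3.\<close>

definition nval :: "nat \<Rightarrow> nat" where
  "nval r = (if r = 3 then 2 else if r \<le> 7 then r div 2 else (r + 1) div 2 - 1)"

definition vecs :: "nat \<Rightarrow> (nat \<Rightarrow> int) set" where
  "vecs r = {x. (\<forall>j. j < r \<longrightarrow> x j \<in> {0,1,2}) \<and> (\<forall>j. r \<le> j \<longrightarrow> x j = 0)}"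

definition I1 :: "nat \<Rightarrow> (nat \<Rightarrow> int) set" where
  "I1 r = {x. (\<forall>j. j < r \<longrightarrow> x j \<in> {0,1}) \<and> (\<forall>j. r \<le> j \<longrightarrow> x j = 0) \<and>
              card {j. j < r \<and> x j = 1} \<in> {nval r .. 2 * nval r - 1}}"

definition I2 :: "nat \<Rightarrow> (nat \<Rightarrow> int) set" where
  "I2 r = (\<lambda>x j. (2 * x j) mod 3) ` I1 r"

datatype pos = P "nat \<Rightarrow> int" | PosO | PosE

definition positions :: "nat \<Rightarrow> pos set" where
  "positions r = P ` (I1 r \<union> I2 r) \<union> {PosO, PosE}"

definition is_word :: "nat \<Rightarrow> (pos \<Rightarrow> int) \<Rightarrow> bool" where
  "is_word r v \<longleftrightarrow> (\<forall>p. v p \<in> {0,1,2}) \<and> (\<forall>p. p \<notin> positions r \<longrightarrow> v p = 0)"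

definition A2_codeword :: "nat \<Rightarrow> (pos \<Rightarrow> int) \<Rightarrow> bool" where
  "A2_codeword r v \<longleftrightarrow> is_word r v \<and>
     (\<forall>j < r. (\<Sum>i \<in> I1 r \<union> I2 r. v (P i) * i j) mod 3 = 0) \<and>
     (v PosO + (\<Sum>i \<in> I1 r. v (P i))) mod 3 = 0 \<and>
     (v PosE + (\<Sum>i \<in> I2 r. v (P i))) mod 3 = 0"

definition is_basis :: "nat \<Rightarrow> (nat \<Rightarrow> int) set \<Rightarrow> bool" where
  "is_basis r R \<longleftrightarrow> R \<subseteq> vecs r \<and>
     (\<forall>y \<in> vecs r. \<exists>c. (\<forall>i\<in>R. c i \<in> {0,1,2}) \<and>
         (\<forall>j < r. (\<Sum>i\<in>R. c i * i j) mod 3 = y j)) \<and>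
     (\<forall>c. (\<forall>i\<in>R. c i \<in> {0,1,2}) \<longrightarrow> (\<forall>j < r. (\<Sum>i\<in>R. c i * i j) mod 3 = 0)
          \<longrightarrow> (\<forall>i\<in>R. c i = 0))"

definition msg_positions :: "nat \<Rightarrow> (nat \<Rightarrow> int) set \<Rightarrow> (nat \<Rightarrow> int) set" where
  "msg_positions r R = (I1 r \<union> I2 r) - R"

definition encode :: "nat \<Rightarrow> (nat \<Rightarrow> int) set \<Rightarrow> ((nat \<Rightarrow> int) \<Rightarrow> int) \<Rightarrow> (pos \<Rightarrow> int)" where
  "encode r R X = (THE w. A2_codeword r w \<and> (\<forall>m \<in> msg_positions r R. w (P m) = X m))"

end

theory Submission
  imports Defs
begin

text \<open>The code is linear over \<open>\<bbbF>\<^sub>3\<close>: the componentwise difference mod 3 of two codewords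
  is again a codeword, and since \<open>R\<close> is a basis a codeword vanishing on the message positions
  vanishes everywhere. So it suffices to show that a nonzero codeword has at least 4 nonzero
  positions. Let \<open>A \<subseteq> I\<^sub>1\<close> and \<open>B \<subseteq> I\<^sub>2\<close> be its nonzero index positions. The vectors of
  \<open>I\<^sub>1\<close> (resp. \<open>I\<^sub>2\<close>) are distinct nonzero vectors with entries in \<open>{0, 1}\<close>
  (resp. \<open>{0, 2}\<close>), so no relation mod 3 among them has one or two terms, and a three-term
  relation cannot have coefficients summing to \<open>0\<close>. If \<open>A\<close> and \<open>B\<close> are both nonempty,
  the checks at \<open>O\<close> and \<open>E\<close> contribute a position whenever \<open>|A| = 1\<close> resp. \<open>|B| = 1\<close>;
  if \<open>B = {}\<close>, then \<open>|A| \<ge> 3\<close> and the check at \<open>O\<close> is violated unless \<open>|A| \<ge> 4\<close> or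
  \<open>v\<^sub>O \<noteq> 0\<close>; symmetrically if \<open>A = {}\<close>.\<close>

lemma mod3_cases: "(z::int) mod 3 \<in> {0, 1, 2}"
proof -
  have "0 \<le> z mod 3" "z mod 3 < 3" by simp_all
  then show ?thesis by auto
qed

lemma mod3_diff_eq_0_iff:
  fixes a b :: int
  assumes "a \<in> {0, 1, 2}" "b \<in> {0, 1, 2}"
  shows "(a - b) mod 3 = 0 \<longleftrightarrow> a = b"
  using assms by auto

lemma mod_sum_mod_mult:
  fixes f c :: "'a \<Rightarrow> int"
  shows "(\<Sum>i\<in>S. (f i mod m) * c i) mod m = (\<Sum>i\<in>S. f i * c i) mod m"
proof -
  have "(\<Sum>i\<in>S. (f i mod m) * c i) mod m = (\<Sum>i\<in>S. (f i mod m * c i) mod m) mod m"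
    by (rule mod_sum_eq[symmetric])
  also have "\<dots> = (\<Sum>i\<in>S. (f i * c i) mod m) mod m"
    by (simp only: mod_mult_left_eq)
  finally show ?thesis by (simp only: mod_sum_eq)
qed

lemma mod_add_sum_mod:
  fixes a :: int and f :: "'a \<Rightarrow> int"
  shows "(a mod m + (\<Sum>i\<in>S. f i mod m)) mod m = (a + (\<Sum>i\<in>S. f i)) mod m"
  by (metis mod_add_eq mod_add_right_eq mod_sum_eq)

lemma finite_vecs: "finite (vecs r)"
proof -
  have "vecs r = {x. \<forall>j. (j \<in> {..<r} \<longrightarrow> x j \<in> {0, 1, 2}) \<and> (j \<notin> {..<r} \<longrightarrow> x j = 0)}"
    by (auto simp: vecs_def not_less)
  then show ?thesis by (simp only:) (rule finite_set_of_finite_funs; simp)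
qed

lemma I1_subset_vecs: "I1 r \<subseteq> vecs r"
  by (auto simp: I1_def vecs_def)

lemma I2_subset_vecs: "I2 r \<subseteq> vecs r"
  using mod3_cases by (auto simp: I2_def I1_def vecs_def)

lemma finite_I1: "finite (I1 r)"
  using finite_subset[OF I1_subset_vecs finite_vecs] .

lemma finite_I2: "finite (I2 r)"
  using finite_subset[OF I2_subset_vecs finite_vecs] .

lemma range_I1: "x \<in> I1 r \<Longrightarrow> range x \<subseteq> {0, 1}"
  unfolding I1_def by (auto simp: not_less[symmetric])

lemma range_I2: "x \<in> I2 r \<Longrightarrow> range x \<subseteq> {0, 2}"
  unfolding I2_def by (fastforce dest!: range_I1)

lemma zero_notin_I1: "3 \<le> r \<Longrightarrow> (\<lambda>_. 0) \<notin> I1 r"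
  by (simp add: I1_def nval_def; presburger)

lemma zero_notin_I2: "3 \<le> r \<Longrightarrow> (\<lambda>_. 0) \<notin> I2 r"
proof
  assume "3 \<le> r" "(\<lambda>_. 0) \<in> I2 r"
  then obtain x where x: "x \<in> I1 r" and zero: "\<And>j. (2 * x j) mod 3 = 0"
    by (auto simp: I2_def fun_eq_iff)
  have "x = (\<lambda>_. 0)"
  proof
    fix j
    have "x j \<in> {0, 1}" using range_I1[OF x] by auto
    then show "x j = 0" using zero[of j] by auto
  qed
  then show False using x zero_notin_I1 \<open>3 \<le> r\<close> by simp
qed

lemma I1_I2_disjoint: "3 \<le> r \<Longrightarrow> I1 r \<inter> I2 r = {}"
proof (rule ccontr)
  assume "3 \<le> r" "I1 r \<inter> I2 r \<noteq> {}"
  then obtain x where x: "x \<in> I1 r" "x \<in> I2 r" by blast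
  then have "x = (\<lambda>_. 0)" using range_I1 range_I2 by fastforce
  then show False using x zero_notin_I1 \<open>3 \<le> r\<close> by simp
qed

lemma mod3_two_term_nonzero:
  fixes a b t x y :: int
  assumes "t \<in> {1, 2}" "x \<in> {0, t}" "y \<in> {0, t}" "x \<noteq> y" "a \<in> {1, 2}" "b \<in> {1, 2}"
  shows "(a * x + b * y) mod 3 \<noteq> 0"
  using assms by (elim insertE emptyE; simp)

text \<open>Coefficients in \<open>{1, 2}\<close> summing to \<open>0\<close> mod 3 are equal, and then
  \<open>x + y + z \<equiv> 0\<close> with \<open>x, y, z \<in> {0, t}\<close> forces \<open>x = y = z\<close>.\<close>
lemma mod3_balanced_three_term:
  fixes a b c t x y z :: int
  assumes "t \<in> {1, 2}" "x \<in> {0, t}" "y \<in> {0, t}" "z \<in> {0, t}"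
    and "a \<in> {1, 2}" "b \<in> {1, 2}" "c \<in> {1, 2}" "(a + b + c) mod 3 = 0"
    and "(a * x + b * y + c * z) mod 3 = 0"
  shows "x = y"
  using assms by (elim insertE emptyE; simp)

lemma mod3_relation_support_card:
  fixes C :: "(nat \<Rightarrow> int) set" and c :: "(nat \<Rightarrow> int) \<Rightarrow> int"
  assumes t: "t \<in> {1, 2}" and C: "finite C" "C \<noteq> {}" "(\<lambda>_. 0) \<notin> C"
    and range: "\<And>x. x \<in> C \<Longrightarrow> range x \<subseteq> {0, t}"
    and coeff: "\<And>x. x \<in> C \<Longrightarrow> c x \<in> {1, 2}"
    and rel: "\<And>j. (\<Sum>x\<in>C. c x * x j) mod 3 = 0"
  shows "3 \<le> card C" and "(\<Sum>x\<in>C. c x) mod 3 = 0 \<Longrightarrow> 4 \<le> card C"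
proof -
  have entry: "x j \<in> {0, t}" if "x \<in> C" for x j
    using range[OF that] by auto
  have "card C \<noteq> 1"
  proof
    assume "card C = 1"
    then obtain a where a: "C = {a}" by (rule card_1_singletonE)
    then obtain j where "a j \<noteq> 0" using C(3) by (auto simp: fun_eq_iff)
    then have "(c a * a j + 1 * 0) mod 3 \<noteq> 0"
      by (intro mod3_two_term_nonzero[OF t]) (use entry coeff a in auto)
    then show False using rel[of j] a by simp
  qed
  moreover have "card C \<noteq> 2"
  proof
    assume "card C = 2"
    then obtain a b where ab: "C = {a, b}" "a \<noteq> b" by (auto simp: card_2_iff)
    then obtain j where "a j \<noteq> b j" by (auto simp: fun_eq_iff)
    then have "(c a * a j + c b * b j) mod 3 \<noteq> 0"
      by (intro mod3_two_term_nonzero[OF t]) (use entry coeff ab in auto)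
    then show False using rel[of j] ab by simp
  qed
  moreover have "card C \<noteq> 0" using C by simp
  ultimately show ge3: "3 \<le> card C" by linarith
  assume sum: "(\<Sum>x\<in>C. c x) mod 3 = 0"
  have "card C \<noteq> 3"
  proof
    assume "card C = 3"
    then obtain a b d where abd: "C = {a, b, d}" "a \<noteq> b" "a \<noteq> d" "b \<noteq> d"
      by (auto simp: card_3_iff)
    then obtain j where "a j \<noteq> b j" by (auto simp: fun_eq_iff)
    moreover have "a j = b j"
      by (rule mod3_balanced_three_term[OF t, of "a j" "b j" "d j" "c a" "c b" "c d"])
        (use entry coeff sum rel[of j] abd in \<open>simp_all add: add.assoc\<close>)
    ultimately show False by simp
  qed
  then show "4 \<le> card C" using ge3 by linarith
qed

lemma parity_check_card_ge_2:
  fixes c :: "'a \<Rightarrow> int"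
  assumes A: "finite A" "A \<noteq> {}" and coeff: "\<And>x. x \<in> A \<Longrightarrow> c x \<in> {1, 2}"
    and check: "(c0 + (\<Sum>x\<in>A. c x)) mod 3 = 0"
  shows "2 \<le> card A + of_bool (c0 \<noteq> 0)"
proof (cases "card A = 1")
  case True
  then obtain a where "A = {a}" by (rule card_1_singletonE)
  then have "c0 \<noteq> 0" using coeff[of a] check by auto
  then show ?thesis using True by simp
next
  case False
  moreover have "0 < card A" using A by (simp add: card_gt_0_iff)
  ultimately show ?thesis by simp
qed

lemma parity_check_card_ge_4:
  fixes A :: "(nat \<Rightarrow> int) set" and c :: "(nat \<Rightarrow> int) \<Rightarrow> int"
  assumes t: "t \<in> {1, 2}" and A: "finite A" "A \<noteq> {}" "(\<lambda>_. 0) \<notin> A"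
    and range: "\<And>x. x \<in> A \<Longrightarrow> range x \<subseteq> {0, t}"
    and coeff: "\<And>x. x \<in> A \<Longrightarrow> c x \<in> {1, 2}"
    and rel: "\<And>j. (\<Sum>x\<in>A. c x * x j) mod 3 = 0"
    and check: "(c0 + (\<Sum>x\<in>A. c x)) mod 3 = 0"
  shows "4 \<le> card A + of_bool (c0 \<noteq> 0)"
proof (cases "c0 = 0")
  case True
  then have "4 \<le> card A"
    using mod3_relation_support_card(2)[OF t A range coeff rel] check by simp
  then show ?thesis by simp
next
  case False
  then show ?thesis using mod3_relation_support_card(1)[OF t A range coeff rel] by simp
qed

lemma A2_codeword_diff:
  assumes v: "A2_codeword r v" and w: "A2_codeword r w"
  shows "A2_codeword r (\<lambda>p. (v p - w p) mod 3)"
proof -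
  have "is_word r (\<lambda>p. (v p - w p) mod 3)"
    using v w mod3_cases by (simp add: A2_codeword_def is_word_def)
  moreover have "(\<Sum>i\<in>I1 r \<union> I2 r. ((v (P i) - w (P i)) mod 3) * i j) mod 3 = 0" if "j < r" for j
    using v w that
    by (simp add: A2_codeword_def mod_sum_mod_mult left_diff_distrib sum_subtractf
        mod_eq_0_iff_dvd dvd_diff)
  moreover have "((v q - w q) mod 3 + (\<Sum>i\<in>S. (v (P i) - w (P i)) mod 3)) mod 3 = 0"
    if "(v q + (\<Sum>i\<in>S. v (P i))) mod 3 = 0" "(w q + (\<Sum>i\<in>S. w (P i))) mod 3 = 0" for q S
  proof -
    have "(v q - w q) + (\<Sum>i\<in>S. v (P i) - w (P i))
        = (v q + (\<Sum>i\<in>S. v (P i))) - (w q + (\<Sum>i\<in>S. w (P i)))"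
      by (simp add: sum_subtractf)
    then show ?thesis
      using that by (simp only: mod_add_sum_mod) (simp add: mod_eq_0_iff_dvd dvd_diff)
  qed
  ultimately show ?thesis
    using v w by (simp add: A2_codeword_def)
qed

lemma A2_codeword_diff_eq_0_iff:
  assumes "A2_codeword r v" "A2_codeword r w"
  shows "(v p - w p) mod 3 = 0 \<longleftrightarrow> v p = w p"
  using assms by (intro mod3_diff_eq_0_iff) (simp_all add: A2_codeword_def is_word_def)

lemma A2_codeword_eq_iff_diff_zero:
  assumes "A2_codeword r v" "A2_codeword r w"
  shows "v = w \<longleftrightarrow> (\<lambda>p. (v p - w p) mod 3) = (\<lambda>_. 0)"
  using A2_codeword_diff_eq_0_iff[OF assms] by (simp add: fun_eq_iff)

lemma A2_codeword_eq_zeroI: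
  assumes v: "A2_codeword r v" and P0: "\<And>i. i \<in> I1 r \<union> I2 r \<Longrightarrow> v (P i) = 0"
  shows "v = (\<lambda>_. 0)"
proof
  fix p
  have word: "is_word r v" and "v PosO mod 3 = 0" "v PosE mod 3 = 0"
    using v P0 by (simp_all add: A2_codeword_def)
  moreover from word have "v PosO \<in> {0, 1, 2}" "v PosE \<in> {0, 1, 2}"
    by (simp_all add: is_word_def)
  ultimately have "v PosO = 0" "v PosE = 0" by auto
  moreover have "v (P i) = 0" for i
    using P0 word by (cases "i \<in> I1 r \<union> I2 r") (auto simp: is_word_def positions_def)
  ultimately show "v p = 0" by (cases p) simp_all
qed

lemma A2_support_card:
  assumes "3 \<le> r"
  shows "card {p \<in> positions r. v p \<noteq> 0} =
    card {i \<in> I1 r. v (P i) \<noteq> 0} + card {i \<in> I2 r. v (P i) \<noteq> 0}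
      + of_bool (v PosO \<noteq> 0) + of_bool (v PosE \<noteq> 0)"
proof -
  let ?A = "{i \<in> I1 r. v (P i) \<noteq> 0}" and ?B = "{i \<in> I2 r. v (P i) \<noteq> 0}"
    and ?F = "{p \<in> {PosO, PosE}. v p \<noteq> 0}"
  have fin: "finite ?A" "finite ?B" using finite_I1 finite_I2 by simp_all
  have "{p \<in> positions r. v p \<noteq> 0} = (P ` ?A \<union> P ` ?B) \<union> ?F"
    by (auto simp: positions_def)
  also have "card \<dots> = card (P ` ?A \<union> P ` ?B) + card ?F"
    using fin by (intro card_Un_disjoint) auto
  also have "card (P ` ?A \<union> P ` ?B) = card ?A + card ?B"
    using I1_I2_disjoint[OF assms] fin
    by (subst card_Un_disjoint) (auto simp: card_image inj_on_def)
  also have "card ?F = of_bool (v PosO \<noteq> 0) + of_bool (v PosE \<noteq> 0)"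
    by (cases "v PosO = 0"; cases "v PosE = 0") (simp_all add: Collect_conj_eq Collect_disj_eq)
  finally show ?thesis by simp
qed

lemma A2_codeword_support_equations:
  assumes v: "A2_codeword r v"
  defines "A \<equiv> {i \<in> I1 r. v (P i) \<noteq> 0}" and "B \<equiv> {i \<in> I2 r. v (P i) \<noteq> 0}"
  shows "(\<Sum>i\<in>A \<union> B. v (P i) * i j) mod 3 = 0"
    and "(v PosO + (\<Sum>i\<in>A. v (P i))) mod 3 = 0"
    and "(v PosE + (\<Sum>i\<in>B. v (P i))) mod 3 = 0"
proof -
  show "(\<Sum>i\<in>A \<union> B. v (P i) * i j) mod 3 = 0"
  proof (cases "j < r")
    case True
    have "(\<Sum>i\<in>A \<union> B. v (P i) * i j) = (\<Sum>i\<in>I1 r \<union> I2 r. v (P i) * i j)"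
      by (rule sum.mono_neutral_left) (auto simp: A_def B_def finite_I1 finite_I2)
    then show ?thesis using v True by (simp add: A2_codeword_def)
  next
    case False
    then have "i j = 0" if "i \<in> A \<union> B" for i
      using that I1_subset_vecs[of r] I2_subset_vecs[of r] by (auto simp: A_def B_def vecs_def)
    then show ?thesis by (simp add: sum.neutral)
  qed
  have "(\<Sum>i\<in>A. v (P i)) = (\<Sum>i\<in>I1 r. v (P i))" "(\<Sum>i\<in>B. v (P i)) = (\<Sum>i\<in>I2 r. v (P i))"
    unfolding A_def B_def by (auto intro: sum.mono_neutral_left simp: finite_I1 finite_I2)
  then show "(v PosO + (\<Sum>i\<in>A. v (P i))) mod 3 = 0" "(v PosE + (\<Sum>i\<in>B. v (P i))) mod 3 = 0"
    using v by (simp_all add: A2_codeword_def)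
qed

lemma A2_codeword_weight:
  assumes r: "3 \<le> r" and v: "A2_codeword r v" and nz: "v \<noteq> (\<lambda>_. 0)"
  shows "4 \<le> card {p \<in> positions r. v p \<noteq> 0}"
proof -
  define A where "A = {i \<in> I1 r. v (P i) \<noteq> 0}"
  define B where "B = {i \<in> I2 r. v (P i) \<noteq> 0}"
  note rel = A2_codeword_support_equations(1)[OF v, folded A_def B_def]
    and checks = A2_codeword_support_equations(2,3)[OF v, folded A_def B_def]
  have fin: "finite A" "finite B" using finite_I1 finite_I2 by (simp_all add: A_def B_def)
  have nonzero: "(\<lambda>_. 0) \<notin> A" "(\<lambda>_. 0) \<notin> B"
    using zero_notin_I1[OF r] zero_notin_I2[OF r] by (auto simp: A_def B_def)
  have range: "\<And>x. x \<in> A \<Longrightarrow> range x \<subseteq> {0, 1}" "\<And>x. x \<in> B \<Longrightarrow> range x \<subseteq> {0, 2}"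
    unfolding A_def B_def using range_I1 range_I2 by blast+
  have coeff: "v (P i) \<in> {1, 2}" if "i \<in> A \<union> B" for i
    using v that by (auto simp: A2_codeword_def is_word_def A_def B_def)
  have "A \<union> B \<noteq> {}"
  proof
    assume "A \<union> B = {}"
    then have "v = (\<lambda>_. 0)" by (intro A2_codeword_eq_zeroI[OF v]) (auto simp: A_def B_def)
    with nz show False ..
  qed
  then consider "A \<noteq> {}" "B \<noteq> {}" | "A \<noteq> {}" "B = {}" | "A = {}" "B \<noteq> {}"
    by blast
  then have "4 \<le> card A + card B + of_bool (v PosO \<noteq> 0) + of_bool (v PosE \<noteq> 0)"
  proof cases
    case 1
    have "2 \<le> card A + of_bool (v PosO \<noteq> 0)"
      by (rule parity_check_card_ge_2[OF fin(1) \<open>A \<noteq> {}\<close> _ checks(1)]) (use coeff in auto)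
    moreover have "2 \<le> card B + of_bool (v PosE \<noteq> 0)"
      by (rule parity_check_card_ge_2[OF fin(2) \<open>B \<noteq> {}\<close> _ checks(2)]) (use coeff in auto)
    ultimately show ?thesis by linarith
  next
    case 2
    have "4 \<le> card A + of_bool (v PosO \<noteq> 0)"
      by (rule parity_check_card_ge_4[OF _ fin(1) \<open>A \<noteq> {}\<close> nonzero(1) range(1) _ _ checks(1)])
        (use coeff rel[unfolded \<open>B = {}\<close>] in auto)
    then show ?thesis by linarith
  next
    case 3
    have "4 \<le> card B + of_bool (v PosE \<noteq> 0)"
      by (rule parity_check_card_ge_4[OF _ fin(2) \<open>B \<noteq> {}\<close> nonzero(2) range(2) _ _ checks(2)])
        (use coeff rel[unfolded \<open>A = {}\<close>] in auto)
    then show ?thesis by linarith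
  qed
  then show ?thesis
    using A2_support_card[OF r, of v] by (simp add: A_def B_def)
qed

lemma A2_codeword_extension_exists:
  assumes R: "R \<subseteq> I1 r \<union> I2 r" and basis: "is_basis r R"
    and X: "\<forall>m \<in> msg_positions r R. X m \<in> {0, 1, 2}"
  shows "\<exists>w. A2_codeword r w \<and> (\<forall>m \<in> msg_positions r R. w (P m) = X m)"
proof -
  let ?M = "msg_positions r R"
  have finR: "finite R" and finM: "finite ?M"
    using R finite_I1 finite_I2 by (auto simp: msg_positions_def intro: finite_subset)
  define y where "y j = (if j < r then (- (\<Sum>m\<in>?M. X m * m j)) mod 3 else 0)" for j
  have "y \<in> vecs r" by (auto simp: y_def vecs_def mod3_cases)
  then obtain c where c: "\<forall>i\<in>R. c i \<in> {0, 1, 2}" "\<forall>j<r. (\<Sum>i\<in>R. c i * i j) mod 3 = y j"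
    using basis by (auto simp: is_basis_def)
  \<comment> \<open>the redundant symbols \<open>c\<close> cancel the syndrome of the message part\<close>
  define u where "u i = (if i \<in> R then c i else if i \<in> ?M then X i else 0)" for i
  define w where "w p = (case p of P i \<Rightarrow> u i
      | PosO \<Rightarrow> (- (\<Sum>i\<in>I1 r. u i)) mod 3 | PosE \<Rightarrow> (- (\<Sum>i\<in>I2 r. u i)) mod 3)" for p
  have "is_word r w"
    unfolding is_word_def
  proof (intro conjI allI impI)
    fix p
    have "u i \<in> {0, 1, 2}" for i
      using c(1) X by (simp add: u_def)
    then show "w p \<in> {0, 1, 2}"
      by (cases p) (simp_all only: w_def pos.case mod3_cases)
    show "w p = 0" if "p \<notin> positions r"
      using that R by (cases p) (auto simp: w_def u_def positions_def msg_positions_def)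
  qed
  moreover have "(\<Sum>i\<in>I1 r \<union> I2 r. w (P i) * i j) mod 3 = 0" if "j < r" for j
  proof -
    have split: "I1 r \<union> I2 r = R \<union> ?M" using R by (auto simp: msg_positions_def)
    have "(\<Sum>i\<in>I1 r \<union> I2 r. w (P i) * i j) = (\<Sum>i\<in>R \<union> ?M. u i * i j)"
      unfolding split by (simp add: w_def)
    also have "\<dots> = (\<Sum>i\<in>R. u i * i j) + (\<Sum>i\<in>?M. u i * i j)"
      by (rule sum.union_disjoint[OF finR finM]) (auto simp: msg_positions_def)
    also have "\<dots> = (\<Sum>i\<in>R. c i * i j) + (\<Sum>m\<in>?M. X m * m j)"
      by (simp add: u_def msg_positions_def)
    finally have sum_split: "(\<Sum>i\<in>I1 r \<union> I2 r. w (P i) * i j)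
        = (\<Sum>i\<in>R. c i * i j) + (\<Sum>m\<in>?M. X m * m j)" .
    have "(\<Sum>i\<in>R. c i * i j) mod 3 = (- (\<Sum>m\<in>?M. X m * m j)) mod 3"
      using c(2) that by (simp add: y_def)
    then have "((\<Sum>i\<in>R. c i * i j) + (\<Sum>m\<in>?M. X m * m j)) mod 3
        = ((- (\<Sum>m\<in>?M. X m * m j)) + (\<Sum>m\<in>?M. X m * m j)) mod 3"
      by (rule mod_add_cong) simp
    then show ?thesis using sum_split by simp
  qed
  moreover have "(w PosO + (\<Sum>i\<in>I1 r. w (P i))) mod 3 = 0" "(w PosE + (\<Sum>i\<in>I2 r. w (P i))) mod 3 = 0"
    by (simp_all only: w_def pos.case mod_add_left_eq) simp_all
  moreover have "\<forall>m \<in> ?M. w (P m) = X m"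
    by (simp add: w_def u_def msg_positions_def)
  ultimately have "A2_codeword r w \<and> (\<forall>m \<in> ?M. w (P m) = X m)"
    by (simp add: A2_codeword_def)
  then show ?thesis by blast
qed

lemma A2_codeword_eq_zero_if_msg_zero:
  assumes R: "R \<subseteq> I1 r \<union> I2 r" and basis: "is_basis r R"
    and v: "A2_codeword r v" and msg: "\<forall>m \<in> msg_positions r R. v (P m) = 0"
  shows "v = (\<lambda>_. 0)"
proof (rule A2_codeword_eq_zeroI[OF v])
  have "(\<Sum>i\<in>R. v (P i) * i j) mod 3 = 0" if "j < r" for j
  proof -
    have "(\<Sum>i\<in>R. v (P i) * i j) = (\<Sum>i\<in>I1 r \<union> I2 r. v (P i) * i j)"
      by (rule sum.mono_neutral_left) (use R msg in \<open>auto simp: finite_I1 finite_I2 msg_positions_def\<close>)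
    then show ?thesis using v that by (simp add: A2_codeword_def)
  qed
  moreover have "\<forall>i\<in>R. v (P i) \<in> {0, 1, 2}"
    using v by (simp add: A2_codeword_def is_word_def)
  moreover have "\<forall>c. (\<forall>i\<in>R. c i \<in> {0, 1, 2}) \<longrightarrow> (\<forall>j<r. (\<Sum>i\<in>R. c i * i j) mod 3 = 0)
      \<longrightarrow> (\<forall>i\<in>R. c i = 0)"
    using basis by (simp add: is_basis_def)
  ultimately have "\<forall>i\<in>R. v (P i) = 0"
    by (blast dest: spec[of _ "\<lambda>i. v (P i)"])
  then show "v (P i) = 0" if "i \<in> I1 r \<union> I2 r" for i
    using that msg by (auto simp: msg_positions_def)
qed

lemma encode_A2_codeword:
  assumes R: "R \<subseteq> I1 r \<union> I2 r" and basis: "is_basis r R"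
    and X: "\<forall>m \<in> msg_positions r R. X m \<in> {0, 1, 2}"
  shows "A2_codeword r (encode r R X)" and "\<forall>m \<in> msg_positions r R. encode r R X (P m) = X m"
proof -
  have "\<exists>!w. A2_codeword r w \<and> (\<forall>m \<in> msg_positions r R. w (P m) = X m)"
  proof (rule ex_ex1I)
    show "\<exists>w. A2_codeword r w \<and> (\<forall>m \<in> msg_positions r R. w (P m) = X m)"
      by (rule A2_codeword_extension_exists[OF R basis X])
  next
    fix w1 w2
    assume w1: "A2_codeword r w1 \<and> (\<forall>m \<in> msg_positions r R. w1 (P m) = X m)"
      and w2: "A2_codeword r w2 \<and> (\<forall>m \<in> msg_positions r R. w2 (P m) = X m)"
    have "(\<lambda>p. (w1 p - w2 p) mod 3) = (\<lambda>_. 0)"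
      by (rule A2_codeword_eq_zero_if_msg_zero[OF R basis A2_codeword_diff]) (use w1 w2 in auto)
    then show "w1 = w2"
      using A2_codeword_eq_iff_diff_zero w1 w2 by blast
  qed
  then have "A2_codeword r (encode r R X) \<and> (\<forall>m \<in> msg_positions r R. encode r R X (P m) = X m)"
    unfolding encode_def by (rule theI')
  then show "A2_codeword r (encode r R X)" "\<forall>m \<in> msg_positions r R. encode r R X (P m) = X m"
    by simp_all
qed

theorem theorem4p1:
  fixes r :: nat and R :: "(nat \<Rightarrow> int) set" and X Y :: "(nat \<Rightarrow> int) \<Rightarrow> int"
  assumes "r \<ge> 3"
    and "R \<subseteq> I1 r" and "card R = r" and "is_basis r R"
    and "\<forall>m \<in> msg_positions r R. X m \<in> {0,1,2}"
    and "\<forall>m \<in> msg_positions r R. Y m \<in> {0,1,2}"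
    and "\<exists>m \<in> msg_positions r R. X m \<noteq> Y m"
  shows "card {p \<in> positions r. encode r R X p \<noteq> encode r R Y p} \<ge> 4"
proof -
  have R: "R \<subseteq> I1 r \<union> I2 r" using assms(2) by blast
  let ?v = "encode r R X" and ?w = "encode r R Y"
  note v = encode_A2_codeword[OF R assms(4,5)] and w = encode_A2_codeword[OF R assms(4,6)]
  have "?v \<noteq> ?w"
    using assms(7) v(2) w(2) by force
  then have "(\<lambda>p. (?v p - ?w p) mod 3) \<noteq> (\<lambda>_. 0)"
    using A2_codeword_eq_iff_diff_zero[OF v(1) w(1)] by blast
  then have "4 \<le> card {p \<in> positions r. (?v p - ?w p) mod 3 \<noteq> 0}"
    by (rule A2_codeword_weight[OF assms(1) A2_codeword_diff[OF v(1) w(1)]])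
  then show ?thesis
    using A2_codeword_diff_eq_0_iff[OF v(1) w(1)] by simp
qed

end
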